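(* Let $n \ge 1$ and let $\boldsymbol{x} \in \mathbb{C}^n$ be a mixture of complex sinusoids, i.e. $\boldsymbol{x} = \sum_{k=1}^{K} s_k \boldsymbol{a}(f_k)$ for some $K$, $s_k \in \mathbb{C}$, $f_k \in [0,1)$. Then $$\|\boldsymbol{x}\|_{\mathcal{A}} = \inf_{r,\; d_j > 0,\; f_j \in [0,1)} \; \lim_{\beta \to 0^+} \left\{ \frac{1}{2}\sum_{j=1}^{r} d_j + \frac{1}{2}\, \boldsymbol{x}^H \boldsymbol{C}^{-1} \boldsymbol{x} \right\},$$ where $\boldsymbol{C} = \sum_{j=1}^{r} d_j\, \boldsymbol{a}(f_j)\boldsymbol{a}(f_j)^H + \beta \boldsymbol{I}$, the infimum is over all positive integers $r$, all $d_1,\dots,d_r>0$ and all $f_1,\dots,f_r \in [0,1)$, and the limit is allowed to take the value $+\infty$.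
   Context: For $f \in [0,1)$, the atom $\boldsymbol{a}(f) \in \mathbb{C}^n$ is $\boldsymbol{a}(f) = [1,\ e^{-2\pi i f},\ e^{-2\pi i 2f},\ \dots,\ e^{-2\pi i (n-1) f}]^T$. The atomic set is $\mathcal{A} = \{\boldsymbol{a}(f) : f \in [0,1)\}$, and the atomic norm of $\boldsymbol{x} \in \mathbb{C}^n$ is $\|\boldsymbol{x}\|_{\mathcal{A}} = \inf\{ \sum_{k=1}^{r} |s_k| : r \in \mathbb{N},\ s_k \in \mathbb{C},\ \boldsymbol{a}_k \in \mathcal{A},\ \boldsymbol{x} = \sum_{k=1}^{r} s_k \boldsymbol{a}_k \}$. $\boldsymbol{I}$ is the $n\times n$ identity, and $^H$ denotes conjugate transpose. *)

theory Defs
  imports "Jordan_Normal_Form.Gauss_Jordan_Elimination" "HOL-Library.Extended_Real"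
begin

definition atom :: "nat \<Rightarrow> real \<Rightarrow> complex vec" where
  "atom n f = vec n (\<lambda>k. cis (- 2 * pi * real k * f))"

definition atomic_norm :: "nat \<Rightarrow> complex vec \<Rightarrow> real" where
  "atomic_norm n x = Inf {(\<Sum>k<r. cmod (s k)) | (r::nat) (s::nat\<Rightarrow>complex) (f::nat\<Rightarrow>real).
      (\<forall>k<r. f k \<in> {0..<1}) \<and>
      x = vec n (\<lambda>i. \<Sum>k<r. s k * (atom n (f k) $ i))}"

definition cov_mat :: "nat \<Rightarrow> nat \<Rightarrow> (nat \<Rightarrow> real) \<Rightarrow> (nat \<Rightarrow> real) \<Rightarrow> real \<Rightarrow> complex mat" where
  "cov_mat n r d f \<beta> =
     mat n n (\<lambda>(i, l). \<Sum>j<r. complex_of_real (d j) * (atom n (f j) $ i) * cnj (atom n (f j) $ l))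
     + complex_of_real \<beta> \<cdot>\<^sub>m 1\<^sub>m n"

definition herm_form :: "complex vec \<Rightarrow> complex mat \<Rightarrow> complex" where
  "herm_form x M = conjugate x \<bullet> (M *\<^sub>v x)"

text \<open>(1/2) sum d_j + (1/2) x^H C^{-1} x (a real number since C is Hermitian).\<close>
definition objective :: "nat \<Rightarrow> complex vec \<Rightarrow> nat \<Rightarrow> (nat \<Rightarrow> real) \<Rightarrow> (nat \<Rightarrow> real) \<Rightarrow> real \<Rightarrow> real" where
  "objective n x r d f \<beta> =
     (1/2) * (\<Sum>j<r. d j) + (1/2) * Re (herm_form x (the (mat_inverse (cov_mat n r d f \<beta>))))"

end

theory Submission
  imports Defs "Jordan_Normal_Form.Determinant"
begin

(* For \<beta> > 0 the matrix C is positive definite, and with y = C\<^sup>-\<^sup>1 x the quadratic term is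
   x\<^sup>H C\<^sup>-\<^sup>1 x = y\<^sup>H C y = \<Sum>\<^sub>j d\<^sub>j |a(f\<^sub>j)\<^sup>H y|\<^sup>2 + \<beta> |y|\<^sup>2.
   Lower bound: x = C y = \<Sum>\<^sub>j d\<^sub>j (a(f\<^sub>j)\<^sup>H y) a(f\<^sub>j) + \<beta> y, and the inverse DFT writes \<beta> y as a
   combination of the atoms a(m/n) with coefficients of total modulus at most \<beta> \<Sum>\<^sub>k |y\<^sub>k|; by
   AM-GM the resulting decomposition costs at most the objective plus n \<beta> / 2.
   Upper bound: if x = \<Sum>\<^sub>k s\<^sub>k a(f\<^sub>k), choose d\<^sub>k = |s\<^sub>k| + \<delta>. Then y\<^sup>H C y = Re (x\<^sup>H y) is at most
   \<Sum>\<^sub>k |s\<^sub>k| |a(f\<^sub>k)\<^sup>H y|, and AM-GM bounds the objective by \<Sum>\<^sub>k |s\<^sub>k| + r \<delta> / 2.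
   The limits exist because x\<^sup>H C\<^sup>-\<^sup>1 x = sup\<^sub>v (2 Re (x\<^sup>H v) - v\<^sup>H C v) decreases in \<beta>. *)

lemma weighted_amgm:
  fixes d w :: real
  assumes "0 \<le> d"
  shows "2 * d * w \<le> d + d * w\<^sup>2"
proof -
  have "0 \<le> d * (w - 1)\<^sup>2" using assms by simp
  then show ?thesis by (simp add: power2_eq_square algebra_simps)
qed

lemma two_Re_cnj_mult_le: "2 * Re (cnj a * b) \<le> (cmod a)\<^sup>2 + (cmod b)\<^sup>2"
proof -
  have "0 \<le> (Re a - Re b)\<^sup>2 + (Im a - Im b)\<^sup>2" by simp
  then show ?thesis unfolding cmod_power2 by (simp add: power2_eq_square algebra_simps)
qed

lemma cnj_mult_self: "cnj a * a = complex_of_real ((cmod a)\<^sup>2)"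
  by (simp add: complex_norm_square mult.commute del: of_real_power)

lemma sum_lessThan_add_split:
  fixes r m :: nat
  shows "(\<Sum>k<r + m. g k) = (\<Sum>k<r. g k) + (\<Sum>k<m. g (r + k))"
  by (induct m) (auto simp: add.assoc)

section \<open>The quadratic form of the covariance matrix\<close>

definition atom_corr :: "nat \<Rightarrow> real \<Rightarrow> complex vec \<Rightarrow> complex" where
  "atom_corr n fr v = (\<Sum>l<n. cnj (atom n fr $ l) * v $ l)"

definition cov_quad :: "nat \<Rightarrow> nat \<Rightarrow> (nat \<Rightarrow> real) \<Rightarrow> (nat \<Rightarrow> real) \<Rightarrow> real \<Rightarrow> complex vec \<Rightarrow> real" where
  "cov_quad n r d f \<beta> v = (\<Sum>j<r. d j * (cmod (atom_corr n (f j) v))\<^sup>2) + \<beta> * (\<Sum>i<n. (cmod (v $ i))\<^sup>2)"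

lemma cov_mat_carrier: "cov_mat n r d f \<beta> \<in> carrier_mat n n"
  unfolding cov_mat_def by auto

lemma cov_mat_mult_vec:
  assumes v: "v \<in> carrier_vec n"
  shows "cov_mat n r d f \<beta> *\<^sub>v v =
    vec n (\<lambda>i. (\<Sum>j<r. complex_of_real (d j) * atom_corr n (f j) v * atom n (f j) $ i) + complex_of_real \<beta> * v $ i)"
    (is "_ = ?rhs")
proof (rule eq_vecI)
  fix i assume "i < dim_vec ?rhs"
  then have i: "i < n" by simp
  have "(cov_mat n r d f \<beta> *\<^sub>v v) $ i =
      (\<Sum>l<n. (\<Sum>j<r. complex_of_real (d j) * atom n (f j) $ i * cnj (atom n (f j) $ l) * v $ l))
      + (\<Sum>l<n. (if i = l then complex_of_real \<beta> else 0) * v $ l)"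
    using i v unfolding cov_mat_def mult_mat_vec_def scalar_prod_def
    by (auto simp: lessThan_atLeast0 distrib_right sum.distrib sum_distrib_right intro!: sum.cong)
  also have "(\<Sum>l<n. (if i = l then complex_of_real \<beta> else 0) * v $ l) = complex_of_real \<beta> * v $ i"
    using i by (simp add: if_distrib[of "\<lambda>t. t * _"] sum.delta cong: if_cong)
  also have "(\<Sum>l<n. (\<Sum>j<r. complex_of_real (d j) * atom n (f j) $ i * cnj (atom n (f j) $ l) * v $ l))
      = (\<Sum>j<r. complex_of_real (d j) * atom_corr n (f j) v * atom n (f j) $ i)"
    by (subst sum.swap) (simp add: atom_corr_def sum_distrib_left mult_ac)
  finally show "(cov_mat n r d f \<beta> *\<^sub>v v) $ i = ?rhs $ i"
    using i by simp
qed (use v in \<open>auto simp: cov_mat_def\<close>)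

lemma scalar_prod_conjugate_atom_comb:
  assumes v: "v \<in> carrier_vec n"
  shows "conjugate (vec n (\<lambda>i. (\<Sum>j<r. c j * atom n (f j) $ i) + b * z $ i)) \<bullet> v
     = (\<Sum>j<r. cnj (c j) * atom_corr n (f j) v) + cnj b * (\<Sum>i<n. cnj (z $ i) * v $ i)"
proof -
  have "conjugate (vec n (\<lambda>i. (\<Sum>j<r. c j * atom n (f j) $ i) + b * z $ i)) \<bullet> v
     = (\<Sum>i<n. (\<Sum>j<r. cnj (c j) * cnj (atom n (f j) $ i) * v $ i)) + (\<Sum>i<n. cnj b * cnj (z $ i) * v $ i)"
    using v unfolding scalar_prod_def
    by (auto simp: lessThan_atLeast0 distrib_right sum.distrib sum_distrib_right)
  also have "\<dots> = (\<Sum>j<r. cnj (c j) * atom_corr n (f j) v) + cnj b * (\<Sum>i<n. cnj (z $ i) * v $ i)"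
    by (subst sum.swap) (simp add: atom_corr_def sum_distrib_left mult_ac)
  finally show ?thesis .
qed

lemma scalar_prod_conjugate_cov_mat_mult_vec:
  assumes u: "u \<in> carrier_vec n" and v: "v \<in> carrier_vec n"
  shows "conjugate (cov_mat n r d f \<beta> *\<^sub>v u) \<bullet> v =
    (\<Sum>j<r. complex_of_real (d j) * (cnj (atom_corr n (f j) u) * atom_corr n (f j) v))
    + complex_of_real \<beta> * (\<Sum>i<n. cnj (u $ i) * v $ i)"
  unfolding cov_mat_mult_vec[OF u] scalar_prod_conjugate_atom_comb[OF v] by (simp add: mult_ac)

lemma cov_mat_quad_form:
  assumes v: "v \<in> carrier_vec n"
  shows "conjugate (cov_mat n r d f \<beta> *\<^sub>v v) \<bullet> v = complex_of_real (cov_quad n r d f \<beta> v)"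
  unfolding scalar_prod_conjugate_cov_mat_mult_vec[OF v v] cov_quad_def by (simp add: cnj_mult_self)

lemma cov_quad_pos:
  assumes "0 < \<beta>" and "\<forall>j<r. 0 \<le> d j" and "v \<noteq> 0\<^sub>v n" and "v \<in> carrier_vec n"
  shows "0 < cov_quad n r d f \<beta> v"
proof -
  obtain i where i: "i < n" "v $ i \<noteq> 0"
    using assms(3,4) by (metis carrier_vecD eq_vecI index_zero_vec)
  have "0 < (\<Sum>i<n. (cmod (v $ i))\<^sup>2)"
    using i by (intro sum_pos2[of _ i]) auto
  moreover have "0 \<le> (\<Sum>j<r. d j * (cmod (atom_corr n (f j) v))\<^sup>2)"
    using assms(2) by (intro sum_nonneg) auto
  ultimately show ?thesis
    unfolding cov_quad_def using assms(1) by (simp add: add_nonneg_pos)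
qed

lemma det_cov_mat_nonzero:
  assumes "0 < \<beta>" and "\<forall>j<r. 0 \<le> d j"
  shows "det (cov_mat n r d f \<beta>) \<noteq> 0"
proof
  assume "det (cov_mat n r d f \<beta>) = 0"
  then obtain v where v: "v \<in> carrier_vec n" "v \<noteq> 0\<^sub>v n" "cov_mat n r d f \<beta> *\<^sub>v v = 0\<^sub>v n"
    using det_0_iff_vec_prod_zero[OF cov_mat_carrier] by blast
  have "complex_of_real (cov_quad n r d f \<beta> v) = 0"
    using cov_mat_quad_form[OF v(1), of r d f \<beta>] v by (simp add: scalar_prod_def)
  with cov_quad_pos[OF assms v(2,1), where f=f] show False by simp
qed

lemma herm_form_inverse_cov_mat:
  assumes x: "x \<in> carrier_vec n" and "0 < \<beta>" and "\<forall>j<r. 0 \<le> d j"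
  obtains y where "y \<in> carrier_vec n" "x = cov_mat n r d f \<beta> *\<^sub>v y"
    "Re (herm_form x (the (mat_inverse (cov_mat n r d f \<beta>)))) = cov_quad n r d f \<beta> y"
proof -
  let ?C = "cov_mat n r d f \<beta>"
  have C: "?C \<in> carrier_mat n n" by (rule cov_mat_carrier)
  have "?C \<in> Units (ring_mat TYPE(complex) n n)"
    by (rule det_non_zero_imp_unit[OF C det_cov_mat_nonzero[OF assms(2,3)]])
  then obtain B where B: "mat_inverse ?C = Some B"
    using mat_inverse(1)[OF C, where b=n] by (cases "mat_inverse ?C") auto
  from mat_inverse(2)[OF C B] have CB: "?C * B = 1\<^sub>m n" and Bc: "B \<in> carrier_mat n n" by auto
  define y where "y = B *\<^sub>v x"
  have y: "y \<in> carrier_vec n" unfolding y_def using Bc x by auto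
  have xy: "x = ?C *\<^sub>v y"
    unfolding y_def using assoc_mult_mat_vec[OF C Bc x] CB x by simp
  have "herm_form x (the (mat_inverse ?C)) = conjugate (?C *\<^sub>v y) \<bullet> y"
    unfolding herm_form_def B y_def using xy y_def by simp
  also have "\<dots> = complex_of_real (cov_quad n r d f \<beta> y)"
    by (rule cov_mat_quad_form[OF y])
  finally show ?thesis using that y xy by simp
qed

section \<open>Monotonicity in \<beta>\<close>

lemma cov_quad_variational:
  assumes y: "y \<in> carrier_vec n" and v: "v \<in> carrier_vec n"
    and "0 \<le> \<beta>" and "\<forall>j<r. 0 \<le> d j"
  shows "2 * Re (conjugate (cov_mat n r d f \<beta> *\<^sub>v y) \<bullet> v) - cov_quad n r d f \<beta> v \<le> cov_quad n r d f \<beta> y"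
proof -
  have "2 * Re (conjugate (cov_mat n r d f \<beta> *\<^sub>v y) \<bullet> v) =
     (\<Sum>j<r. d j * (2 * Re (cnj (atom_corr n (f j) y) * atom_corr n (f j) v))) + \<beta> * (\<Sum>i<n. 2 * Re (cnj (y $ i) * v $ i))"
    unfolding scalar_prod_conjugate_cov_mat_mult_vec[OF y v] by (simp add: sum_distrib_left algebra_simps)
  also have "\<dots> \<le> (\<Sum>j<r. d j * ((cmod (atom_corr n (f j) y))\<^sup>2 + (cmod (atom_corr n (f j) v))\<^sup>2))
      + \<beta> * (\<Sum>i<n. (cmod (y $ i))\<^sup>2 + (cmod (v $ i))\<^sup>2)"
    using assms(3,4) by (intro add_mono sum_mono mult_left_mono two_Re_cnj_mult_le) auto
  also have "\<dots> = cov_quad n r d f \<beta> y + cov_quad n r d f \<beta> v"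
    by (simp add: cov_quad_def sum.distrib distrib_left distrib_right)
  finally show ?thesis by simp
qed

lemma objective_antimono:
  assumes x: "x \<in> carrier_vec n" and "0 < \<beta>\<^sub>1" and "\<beta>\<^sub>1 \<le> \<beta>\<^sub>2" and d: "\<forall>j<r. 0 \<le> d j"
  shows "objective n x r d f \<beta>\<^sub>2 \<le> objective n x r d f \<beta>\<^sub>1"
proof -
  have "0 < \<beta>\<^sub>2" using assms(2,3) by simp
  obtain y\<^sub>1 where y\<^sub>1: "y\<^sub>1 \<in> carrier_vec n" "x = cov_mat n r d f \<beta>\<^sub>1 *\<^sub>v y\<^sub>1"
    "Re (herm_form x (the (mat_inverse (cov_mat n r d f \<beta>\<^sub>1)))) = cov_quad n r d f \<beta>\<^sub>1 y\<^sub>1"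
    using herm_form_inverse_cov_mat[OF x \<open>0 < \<beta>\<^sub>1\<close> d] by blast
  obtain y\<^sub>2 where y\<^sub>2: "y\<^sub>2 \<in> carrier_vec n" "x = cov_mat n r d f \<beta>\<^sub>2 *\<^sub>v y\<^sub>2"
    "Re (herm_form x (the (mat_inverse (cov_mat n r d f \<beta>\<^sub>2)))) = cov_quad n r d f \<beta>\<^sub>2 y\<^sub>2"
    using herm_form_inverse_cov_mat[OF x \<open>0 < \<beta>\<^sub>2\<close> d] by blast
  have "Re (conjugate x \<bullet> y\<^sub>2) = cov_quad n r d f \<beta>\<^sub>2 y\<^sub>2"
    using cov_mat_quad_form[OF y\<^sub>2(1)] y\<^sub>2(2) by simp
  moreover have "2 * Re (conjugate x \<bullet> y\<^sub>2) - cov_quad n r d f \<beta>\<^sub>1 y\<^sub>2 \<le> cov_quad n r d f \<beta>\<^sub>1 y\<^sub>1"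
    using cov_quad_variational[OF y\<^sub>1(1) y\<^sub>2(1), of \<beta>\<^sub>1 r d f] assms(2) d y\<^sub>1(2) by simp
  moreover have "cov_quad n r d f \<beta>\<^sub>1 y\<^sub>2 \<le> cov_quad n r d f \<beta>\<^sub>2 y\<^sub>2"
    unfolding cov_quad_def using assms(3) by (intro add_left_mono mult_right_mono sum_nonneg) auto
  ultimately show ?thesis
    unfolding objective_def using y\<^sub>1(3) y\<^sub>2(3) by simp
qed

lemma tendsto_SUP_at_right_antimono:
  fixes g :: "real \<Rightarrow> 'a::{complete_linorder, linorder_topology}"
  assumes antimono: "\<And>a b. c < a \<Longrightarrow> a \<le> b \<Longrightarrow> g b \<le> g a"
  shows "(g \<longlongrightarrow> (SUP t\<in>{c<..}. g t)) (at_right c)"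
proof (rule order_tendstoI)
  fix a assume "a < (SUP t\<in>{c<..}. g t)"
  then obtain b where "c < b" "a < g b" by (auto simp: less_SUP_iff)
  then show "\<forall>\<^sub>F t in at_right c. a < g t"
    unfolding eventually_at_right_field using antimono by (intro exI[of _ b]) (auto intro: less_le_trans)
next
  fix a assume "(SUP t\<in>{c<..}. g t) < a"
  moreover have "\<forall>\<^sub>F t in at_right c. g t \<le> (SUP t\<in>{c<..}. g t)"
    using eventually_at_right_less[of c] by (rule eventually_mono) (auto intro: SUP_upper)
  ultimately show "\<forall>\<^sub>F t in at_right c. g t < a"
    by (auto elim: eventually_mono)
qed

lemma objective_tendsto_Lim:
  assumes "x \<in> carrier_vec n" and "\<forall>j<r. 0 \<le> d j"
  shows "((\<lambda>\<beta>. ereal (objective n x r d f \<beta>)) \<longlongrightarrow> Lim (at_right 0) (\<lambda>\<beta>. ereal (objective n x r d f \<beta>))) (at_right 0)"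
proof -
  have "((\<lambda>\<beta>. ereal (objective n x r d f \<beta>)) \<longlongrightarrow> (SUP \<beta>\<in>{0<..}. ereal (objective n x r d f \<beta>))) (at_right 0)"
    by (rule tendsto_SUP_at_right_antimono) (simp add: objective_antimono[OF assms(1) _ _ assms(2)])
  then show ?thesis
    by (simp add: tendsto_Lim)
qed

section \<open>The inverse DFT in terms of atoms\<close>

lemma atom_grid_nth:
  assumes "i < n"
  shows "atom n (real m / real n) $ i = cnj (cis (2 * pi * real i / real n)) ^ m"
proof -
  have "atom n (real m / real n) $ i = cis (real m * - (2 * pi * real i / real n))"
    using assms unfolding atom_def by (simp add: algebra_simps)
  also have "\<dots> = cnj (cis (2 * pi * real i / real n)) ^ m"
    by (simp add: cis_cnj DeMoivre)
  finally show ?thesis .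
qed

lemma sum_powers_ratio_roots_unity:
  assumes "k < n" and "i < n"
  shows "(\<Sum>m<n. (cis (2 * pi * real k / real n) * cnj (cis (2 * pi * real i / real n))) ^ m)
    = (if k = i then of_nat n else 0)"
proof -
  let ?\<omega> = "\<lambda>k. cis (2 * pi * real k / real n)"
  have roots: "bij_betw ?\<omega> {..<n} {z. z ^ n = 1}"
    using assms by (intro bij_betw_roots_unity) simp
  have unit: "cnj (?\<omega> j) * ?\<omega> j = 1" "?\<omega> j * cnj (?\<omega> j) = 1" for j
    by (simp_all add: cis_cnj cis_mult)
  show ?thesis
  proof (cases "k = i")
    case True
    then show ?thesis unfolding True unit(2) by simp
  next
    case False
    then have "?\<omega> k \<noteq> ?\<omega> i"
      using inj_onD[OF bij_betw_imp_inj_on[OF roots], of k i] assms by auto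
    moreover have "?\<omega> k * cnj (?\<omega> i) * ?\<omega> i = ?\<omega> k"
      using mult.assoc[of "?\<omega> k" "cnj (?\<omega> i)" "?\<omega> i"] unit(1)[of i] by simp
    ultimately have "?\<omega> k * cnj (?\<omega> i) \<noteq> 1"
      by (metis mult_1_left)
    moreover have "(?\<omega> k * cnj (?\<omega> i)) ^ n = 1"
      using bij_betwE[OF roots] assms by (simp add: power_mult_distrib flip: complex_cnj_power)
    ultimately show ?thesis
      using False by (simp add: sum_gp_strict)
  qed
qed

definition dft_coeff :: "nat \<Rightarrow> complex vec \<Rightarrow> nat \<Rightarrow> complex" where
  "dft_coeff n v m = (\<Sum>k<n. v $ k * cis (2 * pi * real k / real n) ^ m) / of_nat n"

lemma dft_inversion:
  assumes "i < n"
  shows "(\<Sum>m<n. dft_coeff n v m * atom n (real m / real n) $ i) = v $ i"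
proof -
  let ?\<omega> = "\<lambda>k. cis (2 * pi * real k / real n)"
  have "(\<Sum>m<n. dft_coeff n v m * atom n (real m / real n) $ i)
      = (\<Sum>m<n. \<Sum>k<n. v $ k * (?\<omega> k * cnj (?\<omega> i)) ^ m) / of_nat n"
    unfolding dft_coeff_def atom_grid_nth[OF assms]
    by (simp add: sum_divide_distrib sum_distrib_left sum_distrib_right power_mult_distrib mult_ac)
  also have "\<dots> = (\<Sum>k<n. v $ k * (\<Sum>m<n. (?\<omega> k * cnj (?\<omega> i)) ^ m)) / of_nat n"
    by (subst sum.swap) (simp add: sum_distrib_left)
  also have "\<dots> = (\<Sum>k<n. v $ k * (if k = i then of_nat n else 0)) / of_nat n"
    using assms by (simp add: sum_powers_ratio_roots_unity)
  also have "\<dots> = v $ i"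
    using assms by (simp add: if_distrib[of "\<lambda>t. _ * t"] sum.delta' cong: if_cong)
  finally show ?thesis .
qed

lemma norm_dft_coeff_le: "cmod (dft_coeff n v m) \<le> (\<Sum>k<n. cmod (v $ k)) / real n"
proof -
  have "cmod (\<Sum>k<n. v $ k * cis (2 * pi * real k / real n) ^ m) \<le> (\<Sum>k<n. cmod (v $ k))"
    by (rule order_trans[OF norm_sum]) (simp add: norm_mult norm_power)
  then show ?thesis
    unfolding dft_coeff_def by (simp add: norm_divide divide_right_mono)
qed

section \<open>Atomic decompositions\<close>

definition atomic_costs :: "nat \<Rightarrow> complex vec \<Rightarrow> real set" where
  "atomic_costs n x = {(\<Sum>k<r. cmod (s k)) | (r::nat) (s::nat\<Rightarrow>complex) (f::nat\<Rightarrow>real).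
      (\<forall>k<r. f k \<in> {0..<1}) \<and> x = vec n (\<lambda>i. \<Sum>k<r. s k * (atom n (f k) $ i))}"

lemma atomic_norm_eq_Inf: "atomic_norm n x = Inf (atomic_costs n x)"
  unfolding atomic_norm_def atomic_costs_def ..

lemma atomic_costsI:
  fixes R :: nat and S :: "nat \<Rightarrow> complex" and F :: "nat \<Rightarrow> real"
  assumes "\<forall>k<R. F k \<in> {0..<1}" and "x = vec n (\<lambda>i. \<Sum>k<R. S k * (atom n (F k) $ i))"
  shows "(\<Sum>k<R. cmod (S k)) \<in> atomic_costs n x"
  unfolding atomic_costs_def using assms by (intro CollectI exI[of _ R] exI[of _ S] exI[of _ F]) simp

lemma atomic_costsE:
  assumes "t \<in> atomic_costs n x"
  obtains R :: nat and S :: "nat \<Rightarrow> complex" and F :: "nat \<Rightarrow> real"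
  where "t = (\<Sum>k<R. cmod (S k))" "\<forall>k<R. F k \<in> {0..<1}"
    "x = vec n (\<lambda>i. \<Sum>k<R. S k * (atom n (F k) $ i))"
  using assms unfolding atomic_costs_def by blast

lemma bdd_below_atomic_costs: "bdd_below (atomic_costs n x)"
  unfolding atomic_costs_def by (auto intro!: bdd_belowI[of _ 0] sum_nonneg)

lemma atomic_norm_le:
  fixes R :: nat and S :: "nat \<Rightarrow> complex" and F :: "nat \<Rightarrow> real"
  assumes "\<forall>k<R. F k \<in> {0..<1}" and "x = vec n (\<lambda>i. \<Sum>k<R. S k * (atom n (F k) $ i))"
  shows "atomic_norm n x \<le> (\<Sum>k<R. cmod (S k))"
  unfolding atomic_norm_eq_Inf by (rule cInf_lower[OF atomic_costsI[OF assms] bdd_below_atomic_costs])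

lemma atomic_decomposition_near_norm:
  fixes K :: nat and s :: "nat \<Rightarrow> complex" and fk :: "nat \<Rightarrow> real"
  assumes "\<forall>k<K. fk k \<in> {0..<1}" and "x = vec n (\<lambda>i. \<Sum>k<K. s k * (atom n (fk k) $ i))"
    and "0 < e"
  obtains R :: nat and S :: "nat \<Rightarrow> complex" and F :: "nat \<Rightarrow> real"
  where "0 < R" "\<forall>k<R. F k \<in> {0..<1}"
    "x = vec n (\<lambda>i. \<Sum>k<R. S k * (atom n (F k) $ i))"
    "(\<Sum>k<R. cmod (S k)) < atomic_norm n x + e"
proof -
  have "atomic_costs n x \<noteq> {}"
    using atomic_costsI[OF assms(1,2)] by blast
  moreover have "Inf (atomic_costs n x) < atomic_norm n x + e"
    using \<open>0 < e\<close> by (simp add: atomic_norm_eq_Inf)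
  ultimately have "\<exists>t\<in>atomic_costs n x. t < atomic_norm n x + e"
    by (rule cInf_lessD)
  then obtain t where t: "t \<in> atomic_costs n x" "t < atomic_norm n x + e"
    by blast
  from t(1) obtain R :: nat and S :: "nat \<Rightarrow> complex" and F :: "nat \<Rightarrow> real"
    where R: "t = (\<Sum>k<R. cmod (S k))" "\<forall>k<R. F k \<in> {0..<1}" "x = vec n (\<lambda>i. \<Sum>k<R. S k * (atom n (F k) $ i))"
    by (rule atomic_costsE)
  define S' where "S' k = (if k < R then S k else 0)" for k
  define F' where "F' k = (if k < R then F k else 0)" for k
  show ?thesis
  proof (rule that[of "Suc R" F' S'])
    show "\<forall>k<Suc R. F' k \<in> {0..<1}"
      using R(2) by (simp add: F'_def)
    show "x = vec n (\<lambda>i. \<Sum>k<Suc R. S' k * (atom n (F' k) $ i))"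
      unfolding R(3) by (intro eq_vecI) (auto simp: S'_def F'_def intro!: sum.cong)
    have "(\<Sum>k<Suc R. cmod (S' k)) = (\<Sum>k<R. cmod (S k))"
      by (auto simp: S'_def intro!: sum.cong)
    then show "(\<Sum>k<Suc R. cmod (S' k)) < atomic_norm n x + e"
      using t(2) R(1) by simp
  qed simp
qed

lemma atomic_norm_cov_mat_mult_vec_le:
  assumes "0 < n" and y: "y \<in> carrier_vec n"
    and "0 \<le> \<beta>" and d: "\<forall>j<r. 0 \<le> d j" and f: "\<forall>j<r. f j \<in> {0..<1}"
  shows "atomic_norm n (cov_mat n r d f \<beta> *\<^sub>v y)
    \<le> (\<Sum>j<r. d j * cmod (atom_corr n (f j) y)) + \<beta> * (\<Sum>k<n. cmod (y $ k))"
proof -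
  define S where "S k = (if k < r then complex_of_real (d k) * atom_corr n (f k) y
    else complex_of_real \<beta> * dft_coeff n y (k - r))" for k
  define F where "F k = (if k < r then f k else real (k - r) / real n)" for k
  have F: "\<forall>k<r + n. F k \<in> {0..<1}"
    using f by (auto simp: F_def)
  have "cov_mat n r d f \<beta> *\<^sub>v y = vec n (\<lambda>i. \<Sum>k<r + n. S k * (atom n (F k) $ i))"
    (is "_ = ?rhs")
  proof (rule eq_vecI)
    fix i assume "i < dim_vec ?rhs"
    then have i: "i < n" by simp
    have "complex_of_real \<beta> * y $ i = (\<Sum>m<n. complex_of_real \<beta> * dft_coeff n y m * atom n (real m / real n) $ i)"
      using dft_inversion[OF i, of y] by (simp add: mult.assoc flip: sum_distrib_left)
    then show "(cov_mat n r d f \<beta> *\<^sub>v y) $ i = ?rhs $ i"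
      using i by (simp add: cov_mat_mult_vec[OF y] sum_lessThan_add_split S_def F_def)
  qed (simp add: cov_mat_def)
  then have "atomic_norm n (cov_mat n r d f \<beta> *\<^sub>v y) \<le> (\<Sum>k<r + n. cmod (S k))"
    by (rule atomic_norm_le[OF F])
  also have "\<dots> = (\<Sum>j<r. d j * cmod (atom_corr n (f j) y)) + (\<Sum>m<n. \<beta> * cmod (dft_coeff n y m))"
    unfolding sum_lessThan_add_split using d \<open>0 \<le> \<beta>\<close> by (simp add: S_def norm_mult)
  also have "(\<Sum>m<n. \<beta> * cmod (dft_coeff n y m)) \<le> (\<Sum>m<n. \<beta> * ((\<Sum>k<n. cmod (y $ k)) / real n))"
    by (intro sum_mono mult_left_mono norm_dft_coeff_le) (use \<open>0 \<le> \<beta>\<close> in auto)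
  also have "\<dots> = \<beta> * (\<Sum>k<n. cmod (y $ k))"
    using \<open>0 < n\<close> by simp
  finally show ?thesis by simp
qed

lemma atomic_norm_le_objective:
  assumes "0 < n" and x: "x \<in> carrier_vec n" and "0 < \<beta>"
    and df: "\<forall>j<r. 0 < d j \<and> f j \<in> {0..<1}"
  shows "atomic_norm n x - real n * \<beta> / 2 \<le> objective n x r d f \<beta>"
proof -
  have d: "\<forall>j<r. 0 \<le> d j" and f: "\<forall>j<r. f j \<in> {0..<1}" using df by auto
  obtain y where y: "y \<in> carrier_vec n" "x = cov_mat n r d f \<beta> *\<^sub>v y"
    "Re (herm_form x (the (mat_inverse (cov_mat n r d f \<beta>)))) = cov_quad n r d f \<beta> y"
    using herm_form_inverse_cov_mat[OF x \<open>0 < \<beta>\<close> d] by blast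
  have "atomic_norm n x \<le> (\<Sum>j<r. d j * cmod (atom_corr n (f j) y)) + \<beta> * (\<Sum>k<n. cmod (y $ k))"
    unfolding y(2) using atomic_norm_cov_mat_mult_vec_le[OF \<open>0 < n\<close> y(1) _ d f] \<open>0 < \<beta>\<close> by simp
  moreover have "2 * (\<Sum>j<r. d j * cmod (atom_corr n (f j) y))
      \<le> (\<Sum>j<r. d j) + (\<Sum>j<r. d j * (cmod (atom_corr n (f j) y))\<^sup>2)"
  proof -
    have "(\<Sum>j<r. 2 * d j * cmod (atom_corr n (f j) y))
        \<le> (\<Sum>j<r. d j + d j * (cmod (atom_corr n (f j) y))\<^sup>2)"
      using d by (intro sum_mono weighted_amgm) auto
    then show ?thesis by (simp add: sum.distrib sum_distrib_left mult.assoc)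
  qed
  moreover have "2 * (\<beta> * (\<Sum>k<n. cmod (y $ k))) \<le> real n * \<beta> + \<beta> * (\<Sum>k<n. (cmod (y $ k))\<^sup>2)"
  proof -
    have "(\<Sum>k<n. 2 * \<beta> * cmod (y $ k)) \<le> (\<Sum>k<n. \<beta> + \<beta> * (cmod (y $ k))\<^sup>2)"
      using \<open>0 < \<beta>\<close> by (intro sum_mono weighted_amgm) auto
    then show ?thesis by (simp add: sum.distrib sum_distrib_left mult.assoc)
  qed
  moreover have "2 * objective n x r d f \<beta> = (\<Sum>j<r. d j)
      + (\<Sum>j<r. d j * (cmod (atom_corr n (f j) y))\<^sup>2) + \<beta> * (\<Sum>k<n. (cmod (y $ k))\<^sup>2)"
    unfolding objective_def y(3) cov_quad_def by (simp add: algebra_simps)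
  ultimately show ?thesis by linarith
qed

lemma atomic_norm_le_objective_Lim:
  assumes "0 < n" and x: "x \<in> carrier_vec n" and df: "\<forall>j<r. 0 < d j \<and> f j \<in> {0..<1}"
  shows "ereal (atomic_norm n x) \<le> Lim (at_right 0) (\<lambda>\<beta>. ereal (objective n x r d f \<beta>))"
proof (rule tendsto_le[OF _ objective_tendsto_Lim[OF x]])
  show "((\<lambda>\<beta>. ereal (atomic_norm n x - real n * \<beta> / 2)) \<longlongrightarrow> ereal (atomic_norm n x)) (at_right 0)"
    by (intro tendsto_ereal tendsto_eq_intros) auto
  show "\<forall>\<^sub>F \<beta> in at_right 0. ereal (atomic_norm n x - real n * \<beta> / 2) \<le> ereal (objective n x r d f \<beta>)"
    using eventually_at_right_less[of "0::real"]
    by (rule eventually_mono) (simp add: atomic_norm_le_objective[OF assms(1,2) _ df])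
qed (use df in auto)

lemma objective_le_atomic_sum:
  fixes R :: nat and s :: "nat \<Rightarrow> complex" and F :: "nat \<Rightarrow> real"
  assumes x: "x \<in> carrier_vec n" and xs: "x = vec n (\<lambda>i. \<Sum>k<R. s k * (atom n (F k) $ i))"
    and "0 < \<beta>" and "0 < \<delta>"
  shows "objective n x R (\<lambda>j. cmod (s j) + \<delta>) F \<beta> \<le> (\<Sum>k<R. cmod (s k)) + real R * \<delta> / 2"
proof -
  let ?d = "\<lambda>j. cmod (s j) + \<delta>"
  have d: "\<forall>j<R. 0 \<le> ?d j" using \<open>0 < \<delta>\<close> by (simp add: add_nonneg_pos less_imp_le)
  obtain y where y: "y \<in> carrier_vec n" "x = cov_mat n R ?d F \<beta> *\<^sub>v y"
    "Re (herm_form x (the (mat_inverse (cov_mat n R ?d F \<beta>)))) = cov_quad n R ?d F \<beta> y"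
    using herm_form_inverse_cov_mat[OF x \<open>0 < \<beta>\<close> d] by blast
  let ?w = "\<lambda>j. cmod (atom_corr n (F j) y)"
  have "complex_of_real (cov_quad n R ?d F \<beta> y) = (\<Sum>j<R. cnj (s j) * atom_corr n (F j) y)"
    using cov_mat_quad_form[OF y(1)] y(2) xs
      scalar_prod_conjugate_atom_comb[OF y(1), where r=R and c=s and f=F and b=0]
    by simp
  then have "cov_quad n R ?d F \<beta> y \<le> cmod (\<Sum>j<R. cnj (s j) * atom_corr n (F j) y)"
    by (metis Re_complex_of_real complex_Re_le_cmod)
  also have "\<dots> \<le> (\<Sum>j<R. cmod (s j) * ?w j)"
    by (rule order_trans[OF norm_sum]) (simp add: norm_mult)
  finally have upper: "cov_quad n R ?d F \<beta> y \<le> (\<Sum>j<R. cmod (s j) * ?w j)" .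
  have lower: "(\<Sum>j<R. ?d j * (?w j)\<^sup>2) \<le> cov_quad n R ?d F \<beta> y"
    unfolding cov_quad_def using \<open>0 < \<beta>\<close> by (simp add: sum_nonneg)
  have "2 * (\<Sum>j<R. cmod (s j) * ?w j) \<le> (\<Sum>j<R. cmod (s j) + ?d j * (?w j)\<^sup>2)"
    unfolding sum_distrib_left
  proof (rule sum_mono)
    fix j
    have "2 * cmod (s j) * ?w j \<le> cmod (s j) + cmod (s j) * (?w j)\<^sup>2"
      by (rule weighted_amgm) simp
    moreover have "0 \<le> \<delta> * (?w j)\<^sup>2" using \<open>0 < \<delta>\<close> by simp
    ultimately show "2 * (cmod (s j) * ?w j) \<le> cmod (s j) + ?d j * (?w j)\<^sup>2"
      by (simp add: algebra_simps)
  qed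
  then have "cov_quad n R ?d F \<beta> y \<le> (\<Sum>j<R. cmod (s j))"
    using upper lower by (simp add: sum.distrib)
  moreover have "objective n x R ?d F \<beta> = ((\<Sum>j<R. cmod (s j)) + real R * \<delta>) / 2 + cov_quad n R ?d F \<beta> y / 2"
    unfolding objective_def y(3) by (simp add: sum.distrib)
  ultimately show ?thesis by argo
qed

lemma objective_Lim_le_atomic_sum:
  fixes R :: nat and s :: "nat \<Rightarrow> complex" and F :: "nat \<Rightarrow> real"
  assumes x: "x \<in> carrier_vec n" and xs: "x = vec n (\<lambda>i. \<Sum>k<R. s k * (atom n (F k) $ i))"
    and "0 < \<delta>"
  shows "Lim (at_right 0) (\<lambda>\<beta>. ereal (objective n x R (\<lambda>j. cmod (s j) + \<delta>) F \<beta>))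
    \<le> ereal ((\<Sum>k<R. cmod (s k)) + real R * \<delta> / 2)"
proof (rule tendsto_le[OF _ tendsto_const objective_tendsto_Lim[OF x]])
  show "\<forall>\<^sub>F \<beta> in at_right 0. ereal (objective n x R (\<lambda>j. cmod (s j) + \<delta>) F \<beta>)
      \<le> ereal ((\<Sum>k<R. cmod (s k)) + real R * \<delta> / 2)"
    using eventually_at_right_less[of "0::real"]
    by (rule eventually_mono) (simp add: objective_le_atomic_sum[OF x xs _ \<open>0 < \<delta>\<close>])
qed (use \<open>0 < \<delta>\<close> in \<open>simp_all add: add_nonneg_nonneg\<close>)

theorem theorem1:
  fixes n :: nat and x :: "complex vec" and K :: nat and s :: "nat \<Rightarrow> complex" and fk :: "nat \<Rightarrow> real"
  assumes "n \<ge> 1"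
    and "x \<in> carrier_vec n"
    and "\<forall>k<K. fk k \<in> {0..<1}"
    and "x = vec n (\<lambda>i. \<Sum>k<K. s k * (atom n (fk k) $ i))"
  shows "ereal (atomic_norm n x) =
    Inf {Lim (at_right 0) (\<lambda>\<beta>. ereal (objective n x r d f \<beta>)) | r d f.
           r > 0 \<and> (\<forall>j<r. d j > 0 \<and> f j \<in> {0..<1})}" (is "_ = Inf ?S")
proof (rule antisym)
  show "ereal (atomic_norm n x) \<le> Inf ?S"
    using atomic_norm_le_objective_Lim[OF _ assms(2)] assms(1) by (auto intro!: Inf_greatest)
  show "Inf ?S \<le> ereal (atomic_norm n x)"
  proof (rule ereal_le_epsilon2)
    fix e :: real
    assume "0 < e"
    then have "0 < e / 2" by simp
    then obtain R :: nat and S :: "nat \<Rightarrow> complex" and F :: "nat \<Rightarrow> real"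
      where R: "0 < R" "\<forall>k<R. F k \<in> {0..<1}"
      "x = vec n (\<lambda>i. \<Sum>k<R. S k * (atom n (F k) $ i))"
      "(\<Sum>k<R. cmod (S k)) < atomic_norm n x + e / 2"
      by (rule atomic_decomposition_near_norm[OF assms(3,4)])
    define \<delta> where "\<delta> = e / real R"
    have "0 < \<delta>" using \<open>0 < e\<close> R(1) by (simp add: \<delta>_def)
    then have "\<forall>j<R. 0 < cmod (S j) + \<delta> \<and> F j \<in> {0..<1}"
      using R(2) by (simp add: add_nonneg_pos)
    then have "Lim (at_right 0) (\<lambda>\<beta>. ereal (objective n x R (\<lambda>j. cmod (S j) + \<delta>) F \<beta>)) \<in> ?S"
      using R(1) by (intro CollectI exI[of _ R] exI[of _ "\<lambda>j. cmod (S j) + \<delta>"] exI[of _ F]) simp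
    then have "Inf ?S \<le> ereal ((\<Sum>k<R. cmod (S k)) + real R * \<delta> / 2)"
      using objective_Lim_le_atomic_sum[OF assms(2) R(3) \<open>0 < \<delta>\<close>] by (rule Inf_lower2)
    also have "\<dots> \<le> ereal (atomic_norm n x) + ereal e"
      using R(1,4) by (simp add: \<delta>_def)
    finally show "Inf ?S \<le> ereal (atomic_norm n x) + ereal e" .
  qed
qed

end
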